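(* Let $f:\mathcal X^n\to\mathcal T$ with $\mathcal T$ finite, $\varepsilon>0$, and $L_{0,1}(s,t)=\mathbf 1\{s\ne t\}$. Let $M$ be the discrete inverse sensitivity mechanism run with privacy parameter $4\varepsilon$. Then $M$ is $4\varepsilon$-differentially private, and for every $\varepsilon$-differentially private $L_{0,1}$-unbiased mechanism $M_{\mathrm{unb}}$ and every $x\in\mathcal X^n$, $$\mathbb E[L_{0,1}(M(x),f(x))]\le \mathbb E[L_{0,1}(M_{\mathrm{unb}}(x),f(x))].$$ That is, the inverse sensitivity mechanism is $4$-optimal against $L_{0,1}$-unbiased mechanisms.
   Context: $d_H$ is the Hamming distance on $\mathcal X^n$; $x,x'$ are neighboring if $d_H(x,x')\le1$. A mechanism $M$ is $\varepsilon$-differentially private if $\mathbb P(M(x)\in S)\le e^\varepsilon\mathbb P(M(x')\in S)$ for all neighboring $x,x'$ and measurable $S$. A mechanism $M$ is $L$-unbiased if $\mathbb E[L(M(x),f(x))]\le\mathbb E[L(M(x),t)]$ for all $x\in\mathcal X^n$, $t\in\mathcal T$. The inverse sensitivity is $\mathrm{len}_f(x;t)=\inf\{d_H(x,x'):f(x')=t\}$ ($\inf\emptyset=+\infty$, $e^{-\infty}=0$), and the discrete inverse sensitivity mechanism with parameter $\varepsilon'$ outputs $t$ with probability $e^{-\mathrm{len}_f(x;t)\varepsilon'/2}\big/\sum_{s\in\mathcal T}e^{-\mathrm{len}_f(x;s)\varepsilon'/2}$. *)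

theory Defs
  imports "HOL-Probability.Probability" "HOL-Library.Extended_Nat"
begin

definition datasets :: "nat \<Rightarrow> 'x list set" where
  "datasets n = {x. length x = n}"

definition hamming :: "'x list \<Rightarrow> 'x list \<Rightarrow> nat" where
  "hamming x x' = card {i. i < length x \<and> x ! i \<noteq> x' ! i}"

definition neighboring :: "'x list \<Rightarrow> 'x list \<Rightarrow> bool" where
  "neighboring x x' \<longleftrightarrow> hamming x x' \<le> 1"

definition diff_private :: "nat \<Rightarrow> real \<Rightarrow> ('x list \<Rightarrow> 't pmf) \<Rightarrow> bool" where
  "diff_private n \<epsilon> M \<longleftrightarrow>
     (\<forall>x\<in>datasets n. \<forall>x'\<in>datasets n. neighboring x x' \<longrightarrow>
        (\<forall>S. measure_pmf.prob (M x) S \<le> exp \<epsilon> * measure_pmf.prob (M x') S))"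

definition expected_loss :: "('t \<Rightarrow> 't \<Rightarrow> real) \<Rightarrow> 't pmf \<Rightarrow> 't \<Rightarrow> real" where
  "expected_loss L p t = measure_pmf.expectation p (\<lambda>s. L s t)"

definition unbiased :: "nat \<Rightarrow> ('t \<Rightarrow> 't \<Rightarrow> real) \<Rightarrow> ('x list \<Rightarrow> 't) \<Rightarrow> ('x list \<Rightarrow> 't pmf) \<Rightarrow> bool" where
  "unbiased n L f M \<longleftrightarrow>
     (\<forall>x\<in>datasets n. \<forall>t. expected_loss L (M x) (f x) \<le> expected_loss L (M x) t)"

definition loss01 :: "'t \<Rightarrow> 't \<Rightarrow> real" where
  "loss01 s t = (if s \<noteq> t then 1 else 0)"

text \<open>Inverse sensitivity (infimum over the empty set is \<infinity>).\<close>
definition inv_len :: "nat \<Rightarrow> ('x list \<Rightarrow> 't) \<Rightarrow> 'x list \<Rightarrow> 't \<Rightarrow> enat" where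
  "inv_len n f x t = Inf ((\<lambda>x'. enat (hamming x x')) ` {x'\<in>datasets n. f x' = t})"

definition inv_weight :: "nat \<Rightarrow> ('x list \<Rightarrow> 't) \<Rightarrow> real \<Rightarrow> 'x list \<Rightarrow> 't \<Rightarrow> real" where
  "inv_weight n f \<epsilon>' x t =
     (case inv_len n f x t of enat k \<Rightarrow> exp (- real k * \<epsilon>' / 2) | \<infinity> \<Rightarrow> 0)"

definition inv_sens_mech :: "nat \<Rightarrow> ('x list \<Rightarrow> 't::finite) \<Rightarrow> real \<Rightarrow> 'x list \<Rightarrow> 't pmf" where
  "inv_sens_mech n f \<epsilon>' x =
     embed_pmf (\<lambda>t. inv_weight n f \<epsilon>' x t / (\<Sum>s\<in>UNIV. inv_weight n f \<epsilon>' x s))"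

end

theory Submission
  imports Defs
begin

text \<open>By group privacy, the output probabilities of an \<open>\<epsilon>\<close>-private mechanism change by at most a
factor \<open>e\<^sup>k\<^sup>\<epsilon>\<close> between datasets at Hamming distance \<open>k\<close>. If the mechanism \<open>M\<close> is also
\<open>L\<^sub>0\<^sub>,\<^sub>1\<close>-unbiased, then \<open>f w\<close> is a mode of \<open>M w\<close> for every dataset \<open>w\<close>; so for \<open>f w = t\<close> at distance
\<open>k\<close> from \<open>x\<close> we get \<open>P[M x = f x] \<le> e\<^sup>k\<^sup>\<epsilon> P[M w = f x] \<le> e\<^sup>k\<^sup>\<epsilon> P[M w = t] \<le> e\<^sup>2\<^sup>k\<^sup>\<epsilon> P[M x = t]\<close>.
Taking \<open>k = len(x;t)\<close> and summing over \<open>t\<close> bounds \<open>P[M x = f x]\<close> by the reciprocal of the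
normalising constant of the inverse sensitivity mechanism with parameter \<open>4\<epsilon>\<close>, which is exactly
the probability that this mechanism outputs \<open>f x\<close>.\<close>

lemma finite_hamming_set: "finite {i. i < length x \<and> x ! i \<noteq> x' ! i}"
  by (rule finite_subset[of _ "{..<length x}"]) auto

lemma hamming_self [simp]: "hamming x x = 0"
  unfolding hamming_def by simp

lemma hamming_sym: "length x = length y \<Longrightarrow> hamming x y = hamming y x"
  unfolding hamming_def by metis

lemma hamming_eq_0_iff:
  assumes "length x = length y"
  shows "hamming x y = 0 \<longleftrightarrow> x = y"
proof
  assume "hamming x y = 0"
  then have "{i. i < length x \<and> x ! i \<noteq> y ! i} = {}"
    using finite_hamming_set[of x y] unfolding hamming_def by simp
  then show "x = y" using assms by (auto intro: nth_equalityI)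
qed simp

lemma hamming_triangle:
  assumes "length x = length y" "length y = length z"
  shows "hamming x z \<le> hamming x y + hamming y z"
proof -
  have "{i. i < length x \<and> x ! i \<noteq> z ! i} \<subseteq>
        {i. i < length x \<and> x ! i \<noteq> y ! i} \<union> {i. i < length y \<and> y ! i \<noteq> z ! i}"
    using assms by auto
  then have "hamming x z \<le>
      card ({i. i < length x \<and> x ! i \<noteq> y ! i} \<union> {i. i < length y \<and> y ! i \<noteq> z ! i})"
    unfolding hamming_def using finite_hamming_set by (intro card_mono) auto
  also have "\<dots> \<le> hamming x y + hamming y z"
    unfolding hamming_def by (rule card_Un_le)
  finally show ?thesis .
qed

lemma hamming_Suc_obtain_neighbor:
  assumes "length x = length z" "hamming x z = Suc k"
  obtains y where "length y = length x" "hamming x y = 1" "hamming y z = k"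
proof -
  let ?D = "{i. i < length x \<and> x ! i \<noteq> z ! i}"
  have "?D \<noteq> {}" using assms(2) unfolding hamming_def by force
  then obtain i where i: "i < length x" "x ! i \<noteq> z ! i" by auto
  define y where "y = x[i := z ! i]"
  have y_length: "length y = length x" unfolding y_def by simp
  have "{j. j < length x \<and> x ! j \<noteq> y ! j} = {i}"
    using i unfolding y_def by (auto simp: nth_list_update)
  then have "hamming x y = 1" unfolding hamming_def by simp
  moreover have "{j. j < length y \<and> y ! j \<noteq> z ! j} = ?D - {i}"
    using i unfolding y_def by (auto simp: nth_list_update)
  then have "hamming y z = k"
    using i assms(2) finite_hamming_set unfolding hamming_def by simp
  ultimately show thesis using that[OF y_length] by simp
qed

lemma diff_private_pmf_le:
  assumes "diff_private n \<epsilon> M" "x \<in> datasets n" "y \<in> datasets n" "hamming x y \<le> 1"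
  shows "pmf (M x) t \<le> exp \<epsilon> * pmf (M y) t"
  using assms unfolding diff_private_def neighboring_def by (metis measure_pmf_single)

lemma diff_private_group_pmf_le:
  assumes "diff_private n \<epsilon> M" "x \<in> datasets n" "z \<in> datasets n"
  shows "pmf (M x) t \<le> exp (real (hamming x z) * \<epsilon>) * pmf (M z) t"
  using assms(2)
proof (induction "hamming x z" arbitrary: x)
  case 0
  then have "x = z" using hamming_eq_0_iff[of x z] assms(3) unfolding datasets_def by simp
  then show ?case by simp
next
  case (Suc k)
  have "length x = length z" using Suc.prems assms(3) unfolding datasets_def by simp
  then obtain y where y: "length y = length x" "hamming x y = 1" "hamming y z = k"
    using hamming_Suc_obtain_neighbor Suc.hyps(2) by metis
  have y_dataset: "y \<in> datasets n" using y Suc.prems unfolding datasets_def by simp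
  have "pmf (M x) t \<le> exp \<epsilon> * pmf (M y) t"
    using diff_private_pmf_le[OF assms(1) Suc.prems y_dataset] y by simp
  also have "\<dots> \<le> exp \<epsilon> * (exp (real k * \<epsilon>) * pmf (M z) t)"
    using Suc.hyps(1)[OF y(3)[symmetric] y_dataset] y(3) by (intro mult_left_mono) auto
  also have "\<dots> = exp (real (hamming x z) * \<epsilon>) * pmf (M z) t"
    by (simp add: Suc.hyps(2)[symmetric] mult_exp_exp algebra_simps)
  finally show ?case .
qed

lemma expected_loss01: "expected_loss loss01 p t = 1 - pmf p t"
proof -
  have "(\<lambda>s. loss01 s t) = indicator (- {t})"
    by (auto simp: loss01_def indicator_def)
  then have "expected_loss loss01 p t = measure_pmf.prob p (- {t})"
    unfolding expected_loss_def by simp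
  also have "\<dots> = 1 - pmf p t"
    using measure_pmf.prob_compl[of "{t}" p] by (simp add: Compl_eq_Diff_UNIV measure_pmf_single)
  finally show ?thesis .
qed

lemma unbiased_loss01_iff_mode:
  "unbiased n loss01 f M \<longleftrightarrow> (\<forall>x\<in>datasets n. \<forall>t. pmf (M x) t \<le> pmf (M x) (f x))"
  unfolding unbiased_def expected_loss01 by simp

lemma inv_len_le_hamming:
  "z \<in> datasets n \<Longrightarrow> f z = t \<Longrightarrow> inv_len n f x t \<le> enat (hamming x z)"
  unfolding inv_len_def by (rule Inf_lower) auto

lemma inv_weight_cases:
  obtains "inv_weight n f e x t = 0"
  | w where "w \<in> datasets n" "f w = t" "inv_weight n f e x t = exp (- real (hamming x w) * e / 2)"
proof (cases "\<exists>z\<in>datasets n. f z = t")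
  case False
  then have "inv_len n f x t = \<infinity>" unfolding inv_len_def by (auto simp: top_enat_def[symmetric])
  then show thesis using that(1) unfolding inv_weight_def by simp
next
  case True
  then obtain z where "z \<in> datasets n" "f z = t" by auto
  then have "inv_len n f x t \<in> (\<lambda>x'. enat (hamming x x')) ` {x'\<in>datasets n. f x' = t}"
    unfolding inv_len_def by (intro wellorder_InfI[of "enat (hamming x z)"]) auto
  then show thesis using that(2) unfolding inv_weight_def by auto
qed

lemma inv_weight_nonneg: "inv_weight n f e x t \<ge> 0"
  by (cases n f e x t rule: inv_weight_cases) auto

lemma inv_weight_ge:
  assumes "e \<ge> 0" "z \<in> datasets n" "f z = t"
  shows "exp (- real (hamming x z) * e / 2) \<le> inv_weight n f e x t"
proof -
  obtain k where k: "inv_len n f x t = enat k" "k \<le> hamming x z"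
    using inv_len_le_hamming[of z n f t x] assms(2,3) by (cases "inv_len n f x t") auto
  then show ?thesis
    using assms(1) unfolding inv_weight_def by (simp add: mult_right_mono)
qed

lemma inv_weight_self:
  assumes "x \<in> datasets n"
  shows "inv_weight n f e x (f x) = 1"
proof -
  have "inv_len n f x (f x) = 0"
    using inv_len_le_hamming[OF assms, of f "f x" x] by (simp add: zero_enat_def[symmetric])
  then show ?thesis unfolding inv_weight_def by (simp add: zero_enat_def)
qed

lemma inv_weight_neighbor_le:
  assumes "e \<ge> 0" "x \<in> datasets n" "y \<in> datasets n" "hamming x y \<le> 1"
  shows "inv_weight n f e y t \<le> exp (e / 2) * inv_weight n f e x t"
proof (cases n f e y t rule: inv_weight_cases)
  case 1
  then show ?thesis using inv_weight_nonneg[of n f e x t] by simp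
next
  case (2 w)
  have "hamming x w \<le> hamming x y + hamming y w"
    using assms(2,3) 2(1) unfolding datasets_def by (intro hamming_triangle) auto
  then have "real (hamming x w) * e \<le> (real (hamming y w) + 1) * e"
    using assms(1,4) by (intro mult_right_mono) auto
  then have "inv_weight n f e y t \<le> exp (e / 2) * exp (- real (hamming x w) * e / 2)"
    using 2(3) by (simp add: mult_exp_exp algebra_simps)
  also have "\<dots> \<le> exp (e / 2) * inv_weight n f e x t"
    using inv_weight_ge[of e w n f t x] assms(1) 2(1,2) by simp
  finally show ?thesis .
qed

lemma inv_weight_sum_ge_1:
  fixes f :: "'x list \<Rightarrow> 't::finite"
  assumes "x \<in> datasets n"
  shows "(\<Sum>s\<in>UNIV. inv_weight n f e x s) \<ge> 1"
proof -
  have "inv_weight n f e x (f x) \<le> (\<Sum>s\<in>UNIV. inv_weight n f e x s)"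
    by (rule member_le_sum) (auto simp: inv_weight_nonneg)
  then show ?thesis using inv_weight_self[OF assms, of f e] by simp
qed

lemma pmf_inv_sens_mech:
  assumes "x \<in> datasets n"
  shows "pmf (inv_sens_mech n f e x) t = inv_weight n f e x t / (\<Sum>s\<in>UNIV. inv_weight n f e x s)"
proof -
  let ?W = "\<Sum>s\<in>UNIV. inv_weight n f e x s"
  have W: "?W \<ge> 1" using inv_weight_sum_ge_1[OF assms] .
  have "(\<integral>\<^sup>+ s. ennreal (inv_weight n f e x s / ?W) \<partial>count_space UNIV)
      = ennreal (\<Sum>s\<in>UNIV. inv_weight n f e x s / ?W)"
    using W by (simp add: nn_integral_count_space_finite sum_ennreal inv_weight_nonneg)
  also have "(\<Sum>s\<in>UNIV. inv_weight n f e x s / ?W) = 1"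
    using W by (simp add: sum_divide_distrib[symmetric])
  finally show ?thesis
    unfolding inv_sens_mech_def using W by (subst pmf_embed_pmf) (auto simp: inv_weight_nonneg)
qed

lemma prob_inv_sens_mech:
  assumes "x \<in> datasets n"
  shows "measure_pmf.prob (inv_sens_mech n f e x) S
    = (\<Sum>t\<in>S. inv_weight n f e x t) / (\<Sum>s\<in>UNIV. inv_weight n f e x s)"
  by (simp add: measure_measure_pmf_finite pmf_inv_sens_mech[OF assms] sum_divide_distrib)

theorem diff_private_inv_sens_mech:
  fixes f :: "'x list \<Rightarrow> 't::finite"
  assumes "e \<ge> 0"
  shows "diff_private n e (inv_sens_mech n f e)"
  unfolding diff_private_def
proof (intro ballI impI allI)
  fix x y :: "'x list" and S
  assume x: "x \<in> datasets n" and y: "y \<in> datasets n" and "neighboring x y"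
  then have xy: "hamming x y \<le> 1" and yx: "hamming y x \<le> 1"
    using hamming_sym[of x y] unfolding neighboring_def datasets_def by auto
  let ?w = "inv_weight n f e"
  let ?W = "\<lambda>x. \<Sum>s\<in>UNIV. ?w x s"
  \<comment> \<open>Each weight changes by a factor at most \<open>e\<^sup>e\<^sup>/\<^sup>2\<close>; this is paid once in the numerator and
    once in the normalising constant.\<close>
  have "?w x t \<le> exp (e / 2) * ?w y t" for t
    using inv_weight_neighbor_le[OF assms y x yx] .
  then have num: "(\<Sum>t\<in>S. ?w x t) \<le> exp (e / 2) * (\<Sum>t\<in>S. ?w y t)"
    by (auto simp: sum_distrib_left intro: sum_mono)
  have "?w y t \<le> exp (e / 2) * ?w x t" for t
    using inv_weight_neighbor_le[OF assms x y xy] .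
  then have den: "?W y \<le> exp (e / 2) * ?W x"
    by (auto simp: sum_distrib_left intro: sum_mono)
  have Wx: "?W x \<ge> 1" and Wy: "?W y \<ge> 1" using inv_weight_sum_ge_1 x y by blast+
  have "(\<Sum>t\<in>S. ?w x t) / ?W x \<le> exp (e / 2) * (\<Sum>t\<in>S. ?w y t) / (exp (- (e / 2)) * ?W y)"
    using num den Wx Wy
    by (intro frac_le mult_nonneg_nonneg sum_nonneg) (auto simp: inv_weight_nonneg exp_minus field_simps)
  also have "\<dots> = exp e * ((\<Sum>t\<in>S. ?w y t) / ?W y)"
    by (simp add: exp_minus field_simps mult_exp_exp)
  finally show "measure_pmf.prob (inv_sens_mech n f e x) S
      \<le> exp e * measure_pmf.prob (inv_sens_mech n f e y) S"
    by (simp add: prob_inv_sens_mech x y)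
qed

lemma unbiased_pmf_mode_le:
  assumes "diff_private n \<epsilon> M" "unbiased n loss01 f M" "x \<in> datasets n" "w \<in> datasets n"
  shows "pmf (M x) (f x) \<le> exp (2 * real (hamming x w) * \<epsilon>) * pmf (M x) (f w)"
proof -
  let ?c = "exp (real (hamming x w) * \<epsilon>)"
  have "hamming w x = hamming x w"
    using assms(3,4) hamming_sym[of x w] unfolding datasets_def by simp
  then have "pmf (M w) (f w) \<le> ?c * pmf (M x) (f w)"
    using diff_private_group_pmf_le[OF assms(1,4,3)] by simp
  moreover have "pmf (M w) (f x) \<le> pmf (M w) (f w)"
    using assms(2,4) unfolding unbiased_loss01_iff_mode by blast
  ultimately have "pmf (M w) (f x) \<le> ?c * pmf (M x) (f w)" by linarith
  moreover have "pmf (M x) (f x) \<le> ?c * pmf (M w) (f x)"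
    using diff_private_group_pmf_le[OF assms(1,3,4)] .
  ultimately have "pmf (M x) (f x) \<le> ?c * (?c * pmf (M x) (f w))"
    by (meson order_trans exp_ge_zero mult_left_mono)
  then show ?thesis by (simp add: mult_exp_exp algebra_simps)
qed

lemma unbiased_pmf_mode_weighted_le:
  assumes "diff_private n \<epsilon> M" "unbiased n loss01 f M" "x \<in> datasets n"
  shows "inv_weight n f (4 * \<epsilon>) x t * pmf (M x) (f x) \<le> pmf (M x) t"
proof (cases n f "4 * \<epsilon>" x t rule: inv_weight_cases)
  case 1
  then show ?thesis by simp
next
  case (2 w)
  have "pmf (M x) (f x) \<le> exp (2 * real (hamming x w) * \<epsilon>) * pmf (M x) t"
    using unbiased_pmf_mode_le[OF assms 2(1)] 2(2) by simp
  then have "exp (- (2 * real (hamming x w) * \<epsilon>)) * pmf (M x) (f x) \<le> pmf (M x) t"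
    by (simp add: exp_minus field_simps)
  moreover have "inv_weight n f (4 * \<epsilon>) x t = exp (- (2 * real (hamming x w) * \<epsilon>))"
    using 2(3) by simp
  ultimately show ?thesis by simp
qed

theorem unbiased_pmf_mode_le_inv_sens_mech:
  fixes f :: "'x list \<Rightarrow> 't::finite"
  assumes "diff_private n \<epsilon> M" "unbiased n loss01 f M" "x \<in> datasets n"
  shows "pmf (M x) (f x) \<le> pmf (inv_sens_mech n f (4 * \<epsilon>) x) (f x)"
proof -
  let ?W = "\<Sum>s\<in>UNIV. inv_weight n f (4 * \<epsilon>) x s"
  have "?W * pmf (M x) (f x) \<le> (\<Sum>t\<in>UNIV. pmf (M x) t)"
    unfolding sum_distrib_right by (intro sum_mono unbiased_pmf_mode_weighted_le[OF assms])
  also have "\<dots> = 1" using measure_measure_pmf_finite[of UNIV "M x"] by simp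
  finally have "pmf (M x) (f x) \<le> 1 / ?W"
    using inv_weight_sum_ge_1[OF assms(3), of f "4 * \<epsilon>"] by (simp add: field_simps)
  then show ?thesis by (simp add: pmf_inv_sens_mech inv_weight_self assms(3))
qed

theorem corollary3p1:
  fixes f :: "'x list \<Rightarrow> 't::finite" and n :: nat and \<epsilon> :: real
  assumes "\<epsilon> > 0"
  shows "diff_private n (4 * \<epsilon>) (inv_sens_mech n f (4 * \<epsilon>)) \<and>
    (\<forall>Munb :: 'x list \<Rightarrow> 't pmf. diff_private n \<epsilon> Munb \<and> unbiased n loss01 f Munb \<longrightarrow>
       (\<forall>x\<in>datasets n.
          expected_loss loss01 (inv_sens_mech n f (4 * \<epsilon>) x) (f x)
            \<le> expected_loss loss01 (Munb x) (f x)))"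
proof (intro conjI allI impI ballI)
  show "diff_private n (4 * \<epsilon>) (inv_sens_mech n f (4 * \<epsilon>))"
    using assms by (intro diff_private_inv_sens_mech) simp
next
  fix M :: "'x list \<Rightarrow> 't pmf" and x :: "'x list"
  assume "diff_private n \<epsilon> M \<and> unbiased n loss01 f M" "x \<in> datasets n"
  then show "expected_loss loss01 (inv_sens_mech n f (4 * \<epsilon>) x) (f x)
      \<le> expected_loss loss01 (M x) (f x)"
    using unbiased_pmf_mode_le_inv_sens_mech[of n \<epsilon> M f x] by (simp add: expected_loss01)
qed

end
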